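(* Let $R>0$ and let $\mathbf X_1,\dots,\mathbf X_n$ be independent random self-adjoint Hilbert–Schmidt operators on a separable Hilbert space with $\mathbb E[\mathbf X_i]=\mathbf 0$ and $\|\mathbf X_i\|\le R$ almost surely. Let $\mathbf Y=\sum_{i=1}^n\mathbf X_i$ and suppose $V,D>0$ satisfy $\|\mathbb E[\mathbf Y^2]\|\le V$ and $\mathrm{tr}(\mathbb E[\mathbf Y^2])\le VD$. Then \[ \mathbb E\big[\|\mathbf Y\|^2\big]\le(2+32D)V+\Big(\frac{2+128D}{9}\Big)R^2. \]
   Context: $\|\cdot\|$ denotes the operator norm. *)

theory Defs
  imports "HOL-Probability.Probability"
begin

definition orthonormal_basis :: "'a::real_inner set \<Rightarrow> bool" where
  "orthonormal_basis B \<longleftrightarrow>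
     (\<forall>e\<in>B. norm e = 1) \<and> (\<forall>e\<in>B. \<forall>f\<in>B. e \<noteq> f \<longrightarrow> inner e f = 0) \<and>
     closure (span B) = UNIV"

definition self_adjoint_op :: "('a::real_inner \<Rightarrow>\<^sub>L 'a) \<Rightarrow> bool" where
  "self_adjoint_op T \<longleftrightarrow> (\<forall>x y. inner (T x) y = inner x (T y))"

definition hilbert_schmidt :: "('a::real_inner \<Rightarrow>\<^sub>L 'a) \<Rightarrow> bool" where
  "hilbert_schmidt T \<longleftrightarrow>
     (\<exists>B. orthonormal_basis B \<and> (\<lambda>e. (norm (T e))\<^sup>2) summable_on B)"

text \<open>Trace of a positive operator, \<open>\<Sum>\<^sub>e \<langle>T e, e\<rangle>\<close> over an orthonormal basis
  (value in [0,\<infinity>]; basis independent for positive operators).\<close>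
definition pos_op_trace :: "('a::real_inner \<Rightarrow>\<^sub>L 'a) \<Rightarrow> ennreal" where
  "pos_op_trace T = (SOME t. \<exists>B. orthonormal_basis B \<and>
      t = (\<integral>\<^sup>+ e. ennreal (inner (T e) e) \<partial>count_space B))"

text \<open>Expectation of a random bounded operator, in the weak (Pettis) sense:
  \<open>\<langle>E[Z] x, y\<rangle> = E[\<langle>Z x, y\<rangle>]\<close> for all \<open>x, y\<close>.\<close>
definition has_op_expectation ::
  "'w measure \<Rightarrow> ('w \<Rightarrow> ('a::real_inner \<Rightarrow>\<^sub>L 'a)) \<Rightarrow> ('a \<Rightarrow>\<^sub>L 'a) \<Rightarrow> bool" where
  "has_op_expectation M Z A \<longleftrightarrow>
     (\<forall>x y. integrable M (\<lambda>\<omega>. inner (Z \<omega> x) y) \<and>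
            (\<integral>\<omega>. inner (Z \<omega> x) y \<partial>M) = inner (A x) y)"

end

theory Submission
  imports Defs
begin

text \<open>For every \<open>\<omega>\<close> and every orthonormal basis \<open>B\<close>, the operator norm is dominated by the
  Hilbert--Schmidt norm: \<open>\<parallel>Y \<omega>\<parallel>\<^sup>2 \<le> \<Sum>\<^sub>e\<^sub>\<in>\<^sub>B \<parallel>Y \<omega> e\<parallel>\<^sup>2\<close>. The basis is countable because the space
  is separable, so Tonelli exchanges expectation and sum; by self-adjointness
  \<open>\<parallel>Y \<omega> e\<parallel>\<^sup>2 = \<langle>Y \<omega>\<^sup>2 e, e\<rangle>\<close>, hence \<open>E \<parallel>Y\<parallel>\<^sup>2 \<le> \<Sum>\<^sub>e \<langle>E[Y\<^sup>2] e, e\<rangle> = tr E[Y\<^sup>2] \<le> V D\<close>, which is already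
  below the claimed bound.\<close>

definition orthonormal :: "'a::real_inner set \<Rightarrow> bool" where
  "orthonormal S \<longleftrightarrow> (\<forall>e\<in>S. norm e = 1) \<and> (\<forall>e\<in>S. \<forall>f\<in>S. e \<noteq> f \<longrightarrow> inner e f = 0)"

lemma orthonormal_basis_iff: "orthonormal_basis B \<longleftrightarrow> orthonormal B \<and> closure (span B) = UNIV"
  by (simp add: orthonormal_basis_def orthonormal_def)

lemma inner_orthonormal:
  assumes "orthonormal S" "e \<in> S" "f \<in> S"
  shows "inner e f = (if e = f then 1 else 0)"
  using assms by (auto simp: orthonormal_def dot_square_norm)

lemma orthonormal_insert:
  assumes "orthonormal S" "norm u = 1" "\<And>f. f \<in> S \<Longrightarrow> inner u f = 0"
  shows "orthonormal (insert u S)"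
  using assms by (auto simp: orthonormal_def inner_commute)

lemma orthonormal_mono: "orthonormal S \<Longrightarrow> T \<subseteq> S \<Longrightarrow> orthonormal T"
  by (auto simp: orthonormal_def)

lemma inner_residual_orthonormal:
  assumes "finite S" "orthonormal S" "f \<in> S"
  shows "inner (x - (\<Sum>b\<in>S. inner b x *\<^sub>R b)) f = 0"
proof -
  have "inner (\<Sum>b\<in>S. inner b x *\<^sub>R b) f = (\<Sum>b\<in>S. inner b x * inner b f)"
    by (simp add: inner_sum_left)
  also have "\<dots> = (\<Sum>b\<in>S. if b = f then inner f x else 0)"
    using assms by (intro sum.cong) (auto simp: inner_orthonormal)
  also have "\<dots> = inner x f"
    using assms by (simp add: inner_commute)
  finally show ?thesis
    by (simp add: inner_diff_left)
qed

lemma power2_norm_sum_orthonormal: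
  assumes "finite F" "orthonormal F"
  shows "(norm (\<Sum>v\<in>F. u v *\<^sub>R v))\<^sup>2 = (\<Sum>v\<in>F. (u v)\<^sup>2)"
proof -
  have "(norm (\<Sum>v\<in>F. u v *\<^sub>R v))\<^sup>2 = (\<Sum>v\<in>F. \<Sum>w\<in>F. u v * u w * inner w v)"
    by (simp add: power2_norm_eq_inner inner_sum_left inner_sum_right sum_distrib_left mult.assoc)
  also have "\<dots> = (\<Sum>v\<in>F. \<Sum>w\<in>F. if w = v then (u v)\<^sup>2 else 0)"
    using assms by (intro sum.cong refl) (auto simp: inner_orthonormal power2_eq_square)
  also have "\<dots> = (\<Sum>v\<in>F. (u v)\<^sup>2)"
    using assms by simp
  finally show ?thesis .
qed

fun gram_schmidt :: "(nat \<Rightarrow> 'a::real_inner) \<Rightarrow> nat \<Rightarrow> 'a set" where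
  "gram_schmidt d 0 = {}"
| "gram_schmidt d (Suc n) =
     (let a = d n - (\<Sum>b\<in>gram_schmidt d n. inner b (d n) *\<^sub>R b)
      in if a = 0 then gram_schmidt d n else insert (a /\<^sub>R norm a) (gram_schmidt d n))"

declare gram_schmidt.simps(2)[simp del]

lemma gram_schmidt_orthonormal_span:
  "finite (gram_schmidt d n) \<and> orthonormal (gram_schmidt d n) \<and> d ` {..<n} \<subseteq> span (gram_schmidt d n)"
proof (induction n)
  case 0
  then show ?case by (simp add: orthonormal_def)
next
  case (Suc n)
  define S where "S = gram_schmidt d n"
  define a where "a = d n - (\<Sum>b\<in>S. inner b (d n) *\<^sub>R b)"
  have S: "finite S" "orthonormal S" "d ` {..<n} \<subseteq> span S"
    using Suc by (auto simp: S_def)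
  have step: "gram_schmidt d (Suc n) = (if a = 0 then S else insert (a /\<^sub>R norm a) S)"
    by (simp add: S_def a_def Let_def gram_schmidt.simps(2))
  have proj: "(\<Sum>b\<in>S. inner b (d n) *\<^sub>R b) \<in> span S"
    by (intro span_sum span_mul span_base)
  have dn: "d n = a + (\<Sum>b\<in>S. inner b (d n) *\<^sub>R b)"
    by (simp add: a_def)
  show ?case
  proof (cases "a = 0")
    case True
    then have "d n \<in> span S" using dn proj by simp
    then show ?thesis using step True S by (auto simp: lessThan_Suc)
  next
    case False
    let ?u = "a /\<^sub>R norm a"
    have "inner ?u f = 0" if "f \<in> S" for f
      using inner_residual_orthonormal[OF S(1,2) that, of "d n"] by (simp add: a_def)
    then have "orthonormal (insert ?u S)"
      using False S(2) by (intro orthonormal_insert) auto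
    moreover have "span S \<subseteq> span (insert ?u S)"
      by (simp add: span_mono subset_insertI)
    moreover have "d n \<in> span (insert ?u S)"
    proof -
      have "d n = norm a *\<^sub>R ?u + (\<Sum>b\<in>S. inner b (d n) *\<^sub>R b)"
        using False dn by simp
      moreover have "norm a *\<^sub>R ?u \<in> span (insert ?u S)"
        by (intro span_mul span_base) simp
      moreover have "(\<Sum>b\<in>S. inner b (d n) *\<^sub>R b) \<in> span (insert ?u S)"
        using proj \<open>span S \<subseteq> span (insert ?u S)\<close> by blast
      ultimately show ?thesis
        by (metis span_add)
    qed
    ultimately show ?thesis using step False S by (auto simp: lessThan_Suc)
  qed
qed

lemma gram_schmidt_mono: "m \<le> n \<Longrightarrow> gram_schmidt d m \<subseteq> gram_schmidt d n"
proof (induction n)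
  case (Suc n)
  have "gram_schmidt d n \<subseteq> gram_schmidt d (Suc n)"
    by (auto simp: Let_def gram_schmidt.simps(2))
  then show ?case using Suc by (cases "m = Suc n") auto
qed simp

lemma orthonormal_basis_exists: "\<exists>B::'a::{real_inner,second_countable_topology} set. orthonormal_basis B"
proof -
  obtain D :: "'a set" where D: "countable D" "\<And>X. open X \<Longrightarrow> X \<noteq> {} \<Longrightarrow> \<exists>d\<in>D. d \<in> X"
    using countable_dense_setE by blast
  have "D \<noteq> {}" using D(2)[of UNIV] by auto
  define d where "d = from_nat_into D"
  have range_d: "range d = D" using D \<open>D \<noteq> {}\<close> by (simp add: d_def)
  define B where "B = (\<Union>n. gram_schmidt d n)"
  have "orthonormal B"
    unfolding orthonormal_def
  proof (intro conjI ballI impI)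
    fix e assume "e \<in> B"
    then show "norm e = 1" using gram_schmidt_orthonormal_span by (force simp: B_def orthonormal_def)
  next
    fix e f assume "e \<in> B" "f \<in> B" "e \<noteq> f"
    then obtain m k where "e \<in> gram_schmidt d m" "f \<in> gram_schmidt d k" by (auto simp: B_def)
    then have "e \<in> gram_schmidt d (max m k)" "f \<in> gram_schmidt d (max m k)"
      using gram_schmidt_mono[of m "max m k" d] gram_schmidt_mono[of k "max m k" d] by auto
    then show "inner e f = 0"
      using gram_schmidt_orthonormal_span[of d "max m k"] inner_orthonormal[of _ e f] \<open>e \<noteq> f\<close> by auto
  qed
  moreover have "D \<subseteq> span B"
  proof
    fix x assume "x \<in> D"
    then obtain n where "x = d n" using range_d by auto
    then have "x \<in> span (gram_schmidt d (Suc n))" using gram_schmidt_orthonormal_span[of d "Suc n"] by blast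
    moreover have "gram_schmidt d (Suc n) \<subseteq> B" by (auto simp: B_def)
    ultimately show "x \<in> span B" using span_mono by blast
  qed
  moreover have "closure D = UNIV"
  proof (rule ccontr)
    assume "closure D \<noteq> UNIV"
    then obtain x where "x \<in> D" "x \<notin> closure D" using D(2)[of "- closure D"] by auto
    then show False using closure_subset by blast
  qed
  ultimately have "closure (span B) = UNIV" by (metis closure_mono top.extremum_uniqueI)
  then show ?thesis using \<open>orthonormal B\<close> orthonormal_basis_iff by blast
qed

text \<open>Distinct elements of an orthonormal set are at distance \<open>\<surd>2 > 1\<close>, so choosing a point of a
  countable dense set within distance \<open>1/2\<close> of each is injective.\<close>
lemma countable_orthonormal:
  fixes B :: "'a::{real_inner,second_countable_topology} set"
  assumes "orthonormal B"
  shows "countable B"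
proof -
  obtain D :: "'a set" where D: "countable D" "\<And>X. open X \<Longrightarrow> X \<noteq> {} \<Longrightarrow> \<exists>d\<in>D. d \<in> X"
    using countable_dense_setE by blast
  have "\<forall>e. \<exists>c. c \<in> D \<and> c \<in> ball e (1/2)"
    using D(2)[OF open_ball] by (metis centre_in_ball empty_iff half_gt_zero zero_less_one)
  then obtain c where c: "\<And>e. c e \<in> D" "\<And>e. dist e (c e) < 1/2" by (metis mem_ball)
  have "inj_on c B"
  proof (rule inj_onI, rule ccontr)
    fix e f assume ef: "e \<in> B" "f \<in> B" "c e = c f" "e \<noteq> f"
    have "dist e f \<le> dist e (c e) + dist f (c f)" using ef(3) by (metis dist_commute dist_triangle)
    then have "dist e f < 1" using c(2)[of e] c(2)[of f] by linarith
    moreover have "(dist e f)\<^sup>2 = 2"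
      using assms ef by (simp add: dist_norm power2_norm_eq_inner inner_diff_left inner_diff_right
          inner_commute inner_orthonormal)
    ultimately show False using power_mono[of "dist e f" 1 2] by simp
  qed
  moreover have "countable (c ` B)" using D(1) c(1) by (meson countable_subset image_subset_iff)
  ultimately show ?thesis using countable_image_inj_on by blast
qed

lemma power2_norm_blinfun_le:
  fixes T :: "'a::real_inner \<Rightarrow>\<^sub>L 'b::real_normed_vector"
  assumes B: "orthonormal_basis B" and s: "\<And>F. finite F \<Longrightarrow> F \<subseteq> B \<Longrightarrow> (\<Sum>e\<in>F. (norm (T e))\<^sup>2) \<le> s"
  shows "(norm T)\<^sup>2 \<le> s"
proof -
  have s0: "0 \<le> s" using s[of "{}"] by simp
  have span_bound: "(norm (T x))\<^sup>2 \<le> s * (norm x)\<^sup>2" if "x \<in> span B" for x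
  proof -
    obtain F u where F: "finite F" "F \<subseteq> B" "x = (\<Sum>v\<in>F. u v *\<^sub>R v)"
      using \<open>x \<in> span B\<close> by (auto simp: span_explicit)
    have orthonormal_F: "orthonormal F"
      using B F(2) orthonormal_mono by (auto simp: orthonormal_basis_iff)
    have "norm (T x) \<le> (\<Sum>v\<in>F. \<bar>u v\<bar> * norm (T v))"
      using norm_sum[of "\<lambda>v. u v *\<^sub>R T v" F]
      by (simp add: F(3) blinfun.sum_right blinfun.scaleR_right)
    then have "(norm (T x))\<^sup>2 \<le> (\<Sum>v\<in>F. \<bar>u v\<bar> * norm (T v))\<^sup>2"
      by (simp add: power_mono)
    also have "\<dots> \<le> (\<Sum>v\<in>F. \<bar>u v\<bar>\<^sup>2) * (\<Sum>v\<in>F. (norm (T v))\<^sup>2)"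
      by (rule Cauchy_Schwarz_ineq_sum)
    also have "\<dots> = (norm x)\<^sup>2 * (\<Sum>v\<in>F. (norm (T v))\<^sup>2)"
      using power2_norm_sum_orthonormal[OF F(1) orthonormal_F, of u] by (simp add: F(3))
    also have "\<dots> \<le> (norm x)\<^sup>2 * s"
      using s[OF F(1,2)] by (simp add: mult_left_mono)
    finally show ?thesis by (simp add: mult.commute)
  qed
  have "closed {x. (norm (T x))\<^sup>2 \<le> s * (norm x)\<^sup>2}"
    by (intro closed_Collect_le continuous_intros)
  then have "closure (span B) \<subseteq> {x. (norm (T x))\<^sup>2 \<le> s * (norm x)\<^sup>2}"
    using span_bound by (intro closure_minimal) auto
  then have "(norm (T x))\<^sup>2 \<le> (sqrt s * norm x)\<^sup>2" for x
    using B s0 by (auto simp: orthonormal_basis_iff power_mult_distrib)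
  then have "norm (T x) \<le> sqrt s * norm x" for x
    by (rule power2_le_imp_le) (simp add: s0)
  then have "norm T \<le> sqrt s"
    using s0 by (intro norm_blinfun_bound) auto
  then show ?thesis
    using s0 by (metis norm_ge_zero power_mono real_sqrt_pow2)
qed

lemma power2_norm_blinfun_le_hilbert_schmidt:
  fixes T :: "'a::real_inner \<Rightarrow>\<^sub>L 'b::real_normed_vector"
  assumes "orthonormal_basis B"
  shows "ennreal ((norm T)\<^sup>2) \<le> (\<integral>\<^sup>+e. ennreal ((norm (T e))\<^sup>2) \<partial>count_space B)"
    (is "_ \<le> ?S")
proof (cases "?S = \<top>")
  case False
  then obtain s where s: "?S = ennreal s" "0 \<le> s" using ennreal_cases by (metis top_neq_ennreal)
  have "(\<Sum>e\<in>F. (norm (T e))\<^sup>2) \<le> s" if "finite F" "F \<subseteq> B" for F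
  proof -
    have "ennreal (\<Sum>e\<in>F. (norm (T e))\<^sup>2) = (\<integral>\<^sup>+e. ennreal ((norm (T e))\<^sup>2) * indicator F e \<partial>count_space B)"
      using that by (subst nn_integral_count_space') (auto simp: sum_ennreal)
    also have "\<dots> \<le> ?S"
      by (intro nn_integral_mono) (auto simp: indicator_def)
    finally show ?thesis using s by simp
  qed
  then have "(norm T)\<^sup>2 \<le> s"
    by (rule power2_norm_blinfun_le[OF assms])
  then show ?thesis using s by (simp add: ennreal_leI)
qed simp

lemma self_adjoint_op_sum:
  "(\<And>i. i \<in> I \<Longrightarrow> self_adjoint_op (T i)) \<Longrightarrow> self_adjoint_op (\<Sum>i\<in>I. T i)"
  by (simp add: self_adjoint_op_def blinfun.sum_left inner_sum_left inner_sum_right)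

lemma pos_op_trace_basis:
  fixes T :: "'a::{real_inner,second_countable_topology} \<Rightarrow>\<^sub>L 'a"
  obtains B where "orthonormal_basis B"
    "pos_op_trace T = (\<integral>\<^sup>+e. ennreal (inner (T e) e) \<partial>count_space B)"
proof -
  have "\<exists>t B. orthonormal_basis B \<and> t = (\<integral>\<^sup>+e. ennreal (inner (T e) e) \<partial>count_space B)"
    using orthonormal_basis_exists[where 'a='a] by blast
  then have "\<exists>B. orthonormal_basis B \<and> pos_op_trace T = (\<integral>\<^sup>+e. ennreal (inner (T e) e) \<partial>count_space B)"
    unfolding pos_op_trace_def by (rule someI_ex)
  then show ?thesis using that by blast
qed

lemma has_op_expectation_square_diagonal:
  assumes sa: "\<And>\<omega>. \<omega> \<in> space M \<Longrightarrow> self_adjoint_op (Y \<omega>)"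
    and EY2: "has_op_expectation M (\<lambda>\<omega>. Y \<omega> o\<^sub>L Y \<omega>) A"
  shows "integrable M (\<lambda>\<omega>. (norm (Y \<omega> e))\<^sup>2)"
    and "inner (A e) e = (\<integral>\<omega>. (norm (Y \<omega> e))\<^sup>2 \<partial>M)"
proof -
  have diag: "inner ((Y \<omega> o\<^sub>L Y \<omega>) e) e = (norm (Y \<omega> e))\<^sup>2" if "\<omega> \<in> space M" for \<omega>
    using sa[OF that] by (simp add: self_adjoint_op_def power2_norm_eq_inner)
  have "integrable M (\<lambda>\<omega>. inner ((Y \<omega> o\<^sub>L Y \<omega>) e) e)"
    and "(\<integral>\<omega>. inner ((Y \<omega> o\<^sub>L Y \<omega>) e) e \<partial>M) = inner (A e) e"
    using EY2 by (auto simp: has_op_expectation_def)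
  moreover have "integrable M (\<lambda>\<omega>. inner ((Y \<omega> o\<^sub>L Y \<omega>) e) e) = integrable M (\<lambda>\<omega>. (norm (Y \<omega> e))\<^sup>2)"
    by (intro Bochner_Integration.integrable_cong refl) (rule diag)
  moreover have "(\<integral>\<omega>. inner ((Y \<omega> o\<^sub>L Y \<omega>) e) e \<partial>M) = (\<integral>\<omega>. (norm (Y \<omega> e))\<^sup>2 \<partial>M)"
    by (intro Bochner_Integration.integral_cong refl) (rule diag)
  ultimately show "integrable M (\<lambda>\<omega>. (norm (Y \<omega> e))\<^sup>2)"
    and "inner (A e) e = (\<integral>\<omega>. (norm (Y \<omega> e))\<^sup>2 \<partial>M)"
    by simp_all
qed

lemma nn_integral_power2_norm_le_pos_op_trace:
  fixes Y :: "'w \<Rightarrow> ('a::{real_inner,second_countable_topology} \<Rightarrow>\<^sub>L 'a)"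
  assumes sa: "\<And>\<omega>. \<omega> \<in> space M \<Longrightarrow> self_adjoint_op (Y \<omega>)"
    and EY2: "has_op_expectation M (\<lambda>\<omega>. Y \<omega> o\<^sub>L Y \<omega>) A"
  shows "(\<integral>\<^sup>+\<omega>. ennreal ((norm (Y \<omega>))\<^sup>2) \<partial>M) \<le> pos_op_trace A"
proof -
  obtain B where B: "orthonormal_basis B"
    and tr: "pos_op_trace A = (\<integral>\<^sup>+e. ennreal (inner (A e) e) \<partial>count_space B)"
    using pos_op_trace_basis .
  note diagonal = has_op_expectation_square_diagonal[OF sa EY2]
  have measurable: "(\<lambda>\<omega>. (norm (Y \<omega> e))\<^sup>2) \<in> borel_measurable M" for e
    using borel_measurable_integrable[OF diagonal(1)] .
  have "(\<integral>\<^sup>+\<omega>. ennreal ((norm (Y \<omega>))\<^sup>2) \<partial>M)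
      \<le> (\<integral>\<^sup>+\<omega>. (\<integral>\<^sup>+e. ennreal ((norm (Y \<omega> e))\<^sup>2) \<partial>count_space B) \<partial>M)"
    by (intro nn_integral_mono power2_norm_blinfun_le_hilbert_schmidt[OF B])
  also have "\<dots> = (\<integral>\<^sup>+e. (\<integral>\<^sup>+\<omega>. ennreal ((norm (Y \<omega> e))\<^sup>2) \<partial>M) \<partial>count_space B)"
    using countable_orthonormal B measurable
    by (intro nn_integral_count_space_nn_integral) (auto simp: orthonormal_basis_iff)
  also have "\<dots> = (\<integral>\<^sup>+e. ennreal (inner (A e) e) \<partial>count_space B)"
    using diagonal by (simp add: nn_integral_eq_integral)
  finally show ?thesis
    unfolding tr .
qed

theorem lemma6:
  fixes M :: "'w measure"
    and X :: "nat \<Rightarrow> 'w \<Rightarrow> ('a::{real_inner, complete_space, second_countable_topology} \<Rightarrow>\<^sub>L 'a)"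
    and n :: nat and R V D :: real and EY2 :: "'a \<Rightarrow>\<^sub>L 'a"
  assumes "prob_space M"
    and "R > 0"
    and meas: "\<And>i. i < n \<Longrightarrow> X i \<in> borel_measurable M"
    and indep: "prob_space.indep_vars M (\<lambda>_. borel) X {..<n}"
    and sa: "\<And>i \<omega>. i < n \<Longrightarrow> \<omega> \<in> space M \<Longrightarrow> self_adjoint_op (X i \<omega>)"
    and hs: "\<And>i \<omega>. i < n \<Longrightarrow> \<omega> \<in> space M \<Longrightarrow> hilbert_schmidt (X i \<omega>)"
    and mean0: "\<And>i. i < n \<Longrightarrow> has_op_expectation M (X i) 0"
    and bdd: "\<And>i. i < n \<Longrightarrow> AE \<omega> in M. norm (X i \<omega>) \<le> R"
    and "V > 0" and "D > 0"
    and EY2: "has_op_expectation M (\<lambda>\<omega>. (\<Sum>i<n. X i \<omega>) o\<^sub>L (\<Sum>i<n. X i \<omega>)) EY2"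
    and "norm EY2 \<le> V"
    and "pos_op_trace EY2 \<le> ennreal (V * D)"
  shows "(\<integral>\<omega>. (norm (\<Sum>i<n. X i \<omega>))\<^sup>2 \<partial>M) \<le> (2 + 32 * D) * V + ((2 + 128 * D) / 9) * R\<^sup>2"
proof -
  have "(\<integral>\<^sup>+\<omega>. ennreal ((norm (\<Sum>i<n. X i \<omega>))\<^sup>2) \<partial>M) \<le> pos_op_trace EY2"
    using sa EY2 by (intro nn_integral_power2_norm_le_pos_op_trace self_adjoint_op_sum) auto
  also have "\<dots> \<le> ennreal (V * D)" by fact
  finally have "(\<integral>\<omega>. (norm (\<Sum>i<n. X i \<omega>))\<^sup>2 \<partial>M) \<le> V * D"
    using assms by (intro integral_real_bounded) auto
  also have "\<dots> \<le> (2 + 32 * D) * V + ((2 + 128 * D) / 9) * R\<^sup>2"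
    using assms by (simp add: distrib_right)
  finally show ?thesis .
qed

end
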